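(* Let $m > 1$ be an integer and $y \in \mathbb{R}^m$. Then there exists a subset $A \subset \{1,\dots,m\}$ such that $|y(i)| \le 2|y(j)|$ for all $i,j \in A$, and $\|y|_A\|_2 \ge \frac{1}{2.5\sqrt{\log m}}\|y\|_2$.
   Context: $y|_A$ denotes the restriction of $y$ to the coordinates in $A$. Here $\log$ denotes the binary logarithm. *)

theory Defs
  imports "HOL-Analysis.Analysis"
begin

end

theory Submission
  imports Defs "HOL-Library.Log_Nat"
begin

text \<open>
  Split the coordinates into dyadic shells \<open>M/2^(k+1) < \<bar>y i\<bar> \<le> M/2^k\<close>, \<open>k < K\<close>, where
  \<open>M = \<parallel>y\<parallel>\<^sub>2\<close> and \<open>K = \<lceil>log m\<rceil>\<close>. Within a shell all entries agree up to a factor 2. The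
  coordinates below all shells have squares at most \<open>M\<^sup>2/4^K\<close> each, so together at most
  \<open>m M\<^sup>2/4^K \<le> M\<^sup>2/2\<close>; hence the \<open>K\<close> shells carry at least half of \<open>\<parallel>y\<parallel>\<^sub>2\<^sup>2\<close>, and one of
  them carries at least \<open>\<parallel>y\<parallel>\<^sub>2\<^sup>2/(2K)\<close>. Finally \<open>2K < 2 log m + 2 \<le> (25/4) log m\<close>.
\<close>

lemma L2_set_power2: "(L2_set f A)\<^sup>2 = (\<Sum>i\<in>A. (f i)\<^sup>2)"
  by (simp add: L2_set_def sum_nonneg)

lemma abs_le_L2_set:
  assumes "finite A" "i \<in> A"
  shows "\<bar>f i\<bar> \<le> L2_set f A"
proof -
  have "\<bar>f i\<bar> \<le> L2_set (\<lambda>j. \<bar>f j\<bar>) A"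
    using assms by (rule member_le_L2_set)
  also have "\<dots> = L2_set f A"
    by (simp add: L2_set_def)
  finally show ?thesis .
qed

definition dyadic_shell :: "('a \<Rightarrow> real) \<Rightarrow> real \<Rightarrow> 'a set \<Rightarrow> nat \<Rightarrow> 'a set" where
  "dyadic_shell y M S k = {i \<in> S. M / 2 ^ Suc k < \<bar>y i\<bar> \<and> \<bar>y i\<bar> \<le> M / 2 ^ k}"

lemma dyadic_shell_subset: "dyadic_shell y M S k \<subseteq> S"
  by (auto simp: dyadic_shell_def)

lemma dyadic_shell_abs_le_double:
  assumes "i \<in> dyadic_shell y M S k" "j \<in> dyadic_shell y M S k"
  shows "\<bar>y i\<bar> \<le> 2 * \<bar>y j\<bar>"
  using assms by (auto simp: dyadic_shell_def)

lemma dyadic_interval_exists: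
  fixes M x :: real
  assumes "M / 2 ^ K < x" "x \<le> M"
  shows "\<exists>k<K. M / 2 ^ Suc k < x \<and> x \<le> M / 2 ^ k"
  using assms
proof (induction K)
  case 0
  then show ?case by simp
next
  case (Suc K)
  show ?case
  proof (cases "M / 2 ^ K < x")
    case True
    then show ?thesis
      using Suc by (metis less_Suc_eq)
  next
    case False
    then show ?thesis
      using Suc.prems by (intro exI[of _ K]) auto
  qed
qed

lemma sum_le_sum_cover:
  fixes f :: "'a \<Rightarrow> real" and K :: nat
  assumes "finite S" and nonneg: "\<And>i. i \<in> S \<Longrightarrow> 0 \<le> f i"
    and "T \<subseteq> S" "\<And>k. B k \<subseteq> S"
    and cover: "\<And>i. i \<in> S \<Longrightarrow> i \<notin> T \<Longrightarrow> \<exists>k<K. i \<in> B k"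
  shows "sum f S \<le> sum f T + (\<Sum>k<K. sum f (B k))"
proof -
  let ?g = "\<lambda>i. (if i \<in> T then f i else 0) + (\<Sum>k<K. if i \<in> B k then f i else 0)"
  have "f i \<le> ?g i" if iS: "i \<in> S" for i
  proof (cases "i \<in> T")
    case True
    then show ?thesis
      using nonneg[OF iS] by (simp add: sum_nonneg)
  next
    case False
    then obtain k where "k < K" "i \<in> B k"
      using cover iS by blast
    then have "(if i \<in> B k then f i else 0) \<le> (\<Sum>k<K. if i \<in> B k then f i else 0)"
      using nonneg[OF iS] by (intro member_le_sum) auto
    then have "f i \<le> (\<Sum>k<K. if i \<in> B k then f i else 0)"
      using \<open>i \<in> B k\<close> by simp
    then show ?thesis
      using False by simp
  qed
  then have "sum f S \<le> sum ?g S"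
    by (rule sum_mono)
  also have "\<dots> = sum f T + (\<Sum>k<K. sum f (B k))"
  proof -
    have restrict: "(\<Sum>i\<in>S. if i \<in> C then f i else 0) = sum f C" if "C \<subseteq> S" for C
      using sum.inter_filter[OF \<open>finite S\<close>, of f "\<lambda>i. i \<in> C"] that
      by (simp add: Collect_conj_eq Int_absorb1)
    have "(\<Sum>i\<in>S. \<Sum>k<K. if i \<in> B k then f i else 0) = (\<Sum>k<K. sum f (B k))"
      using sum.swap[of "\<lambda>i k. if i \<in> B k then f i else 0" "{..<K}" S] assms(4)
      by (simp add: restrict)
    then show ?thesis
      using assms(3) by (simp add: sum.distrib restrict)
  qed
  finally show ?thesis .
qed

lemma exists_ge_average:
  fixes a :: "nat \<Rightarrow> real"
  assumes "s \<le> (\<Sum>k<K. a k)" "K > 0"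
  shows "\<exists>k<K. s \<le> real K * a k"
proof (rule ccontr)
  assume "\<not> ?thesis"
  then have "\<forall>k<K. a k < s / real K"
    using assms(2) by (auto simp: field_simps)
  then have "(\<Sum>k<K. a k) < (\<Sum>k<K. s / real K)"
    using assms(2) by (intro sum_strict_mono) auto
  then show False
    using assms by simp
qed

lemma sum_squares_le_double_dyadic_shells:
  fixes y :: "'a \<Rightarrow> real"
  assumes "finite S" and bound: "\<And>i. i \<in> S \<Longrightarrow> \<bar>y i\<bar> \<le> M"
    and "0 \<le> M" "M \<le> L2_set y S"
    and card: "card S \<le> 2 ^ K" and "K > 0"
  shows "(\<Sum>i\<in>S. (y i)\<^sup>2) \<le> 2 * (\<Sum>k<K. \<Sum>i\<in>dyadic_shell y M S k. (y i)\<^sup>2)"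
proof -
  define T where "T = {i \<in> S. \<bar>y i\<bar> \<le> M / 2 ^ K}"
  have M2: "M\<^sup>2 \<le> (\<Sum>i\<in>S. (y i)\<^sup>2)"
    using power_mono[OF \<open>M \<le> L2_set y S\<close> \<open>0 \<le> M\<close>, of 2] by (simp add: L2_set_power2)
  have "(\<Sum>i\<in>T. (y i)\<^sup>2) \<le> real (card T) * (M / 2 ^ K)\<^sup>2"
    using \<open>0 \<le> M\<close> by (intro sum_bounded_above) (auto simp: T_def abs_le_square_iff[symmetric])
  also have "\<dots> \<le> 2 ^ K * (M / 2 ^ K)\<^sup>2"
  proof (rule mult_right_mono)
    have "card T \<le> card S"
      using \<open>finite S\<close> by (intro card_mono) (auto simp: T_def)
    with card show "real (card T) \<le> 2 ^ K"
      by (metis le_trans of_nat_le_iff of_nat_numeral of_nat_power)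
  qed simp
  also have "\<dots> = M\<^sup>2 / 2 ^ K"
    by (simp add: power2_eq_square)
  also have "\<dots> \<le> M\<^sup>2 / 2"
    using \<open>K > 0\<close> by (intro divide_left_mono) (auto simp: self_le_power)
  finally have tail: "(\<Sum>i\<in>T. (y i)\<^sup>2) \<le> (\<Sum>i\<in>S. (y i)\<^sup>2) / 2"
    using M2 by linarith
  have "(\<Sum>i\<in>S. (y i)\<^sup>2) \<le> (\<Sum>i\<in>T. (y i)\<^sup>2) + (\<Sum>k<K. \<Sum>i\<in>dyadic_shell y M S k. (y i)\<^sup>2)"
  proof (rule sum_le_sum_cover)
    fix i assume "i \<in> S" "i \<notin> T"
    then show "\<exists>k<K. i \<in> dyadic_shell y M S k"
      using dyadic_interval_exists[of M K "\<bar>y i\<bar>"] bound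
      by (auto simp: T_def dyadic_shell_def)
  qed (use \<open>finite S\<close> in \<open>auto simp: T_def dyadic_shell_subset\<close>)
  with tail show ?thesis
    by linarith
qed

lemma L2_set_le_dyadic_shell:
  fixes y :: "'a \<Rightarrow> real"
  assumes "finite S" "card S \<le> 2 ^ K" "K > 0"
  shows "\<exists>k<K. (L2_set y S)\<^sup>2 \<le> 2 * real K * (L2_set y (dyadic_shell y (L2_set y S) S k))\<^sup>2"
proof -
  have "\<bar>y i\<bar> \<le> L2_set y S" if "i \<in> S" for i
    using abs_le_L2_set[OF \<open>finite S\<close> that] .
  then have "(\<Sum>i\<in>S. (y i)\<^sup>2) / 2 \<le> (\<Sum>k<K. \<Sum>i\<in>dyadic_shell y (L2_set y S) S k. (y i)\<^sup>2)"
    using sum_squares_le_double_dyadic_shells[of S y "L2_set y S" K] assms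
    by simp
  then obtain k where "k < K"
    "(\<Sum>i\<in>S. (y i)\<^sup>2) / 2 \<le> real K * (\<Sum>i\<in>dyadic_shell y (L2_set y S) S k. (y i)\<^sup>2)"
    using exists_ge_average \<open>K > 0\<close> by blast
  then show ?thesis
    by (auto simp: L2_set_power2)
qed

theorem lemma3p7:
  fixes m :: nat and y :: "nat \<Rightarrow> real"
  assumes "m > 1"
  shows "\<exists>A. A \<subseteq> {1..m} \<and>
           (\<forall>i\<in>A. \<forall>j\<in>A. \<bar>y i\<bar> \<le> 2 * \<bar>y j\<bar>) \<and>
           L2_set y A \<ge> 1 / (5/2 * sqrt (log 2 (real m))) * L2_set y {1..m}"
proof -
  define K where "K = ceillog2 m"
  define L where "L = log 2 (real m)"
  have "K > 0"
    using ceillog2_ge_iff[of m 1] assms by (simp add: K_def)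
  have "m \<le> 2 ^ K"
    by (simp add: K_def le_two_power_ceillog2)
  then obtain k where "k < K" and
    large: "(L2_set y {1..m})\<^sup>2 \<le> 2 * real K * (L2_set y (dyadic_shell y (L2_set y {1..m}) {1..m} k))\<^sup>2"
    using L2_set_le_dyadic_shell[of "{1..m}" K y] \<open>K > 0\<close> by auto
  define A where "A = dyadic_shell y (L2_set y {1..m}) {1..m} k"
  have "L \<ge> 1" "real K < L + 1"
    using assms ceillog2_less_log[of m] by (simp_all add: L_def K_def)
  then have "2 * real K \<le> 25/4 * L"
    by linarith
  then have "(L2_set y {1..m})\<^sup>2 \<le> 25/4 * L * (L2_set y A)\<^sup>2"
    using large mult_right_mono[OF _ zero_le_power2[of "L2_set y A"]] unfolding A_def
    by (meson order_trans)
  also have "\<dots> = (5/2 * sqrt L * L2_set y A)\<^sup>2"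
    using \<open>L \<ge> 1\<close> unfolding power_mult_distrib by (simp add: power2_eq_square)
  finally have "L2_set y {1..m} \<le> 5/2 * sqrt L * L2_set y A"
    by (rule power2_le_imp_le) (use \<open>L \<ge> 1\<close> in simp)
  then have "1 / (5/2 * sqrt L) * L2_set y {1..m} \<le> L2_set y A"
    using \<open>L \<ge> 1\<close> by (simp add: pos_divide_le_eq mult.commute)
  moreover have "A \<subseteq> {1..m}"
    by (simp add: A_def dyadic_shell_subset)
  moreover have "\<forall>i\<in>A. \<forall>j\<in>A. \<bar>y i\<bar> \<le> 2 * \<bar>y j\<bar>"
    using dyadic_shell_abs_le_double[of _ y] unfolding A_def by blast
  ultimately show ?thesis
    unfolding L_def by blast
qed

end
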